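(* Let $n\geq 3$ and let $A$ be an $F_n$-good $n\times n$ matrix. If row $i$ of $A$ has two entries equal to $1$, in columns $j$ and $k$ with $j<k$, then $k=j+2$ and $i\in\{1,n\}$.
   Context: $F_n$ is the set of vectors $\vec{x}=(x_1,\ldots,x_n)\in\mathbb{Z}_2^n$ with no $i$ such that $x_i=x_{i+1}=1$. An $n\times n$ matrix $A$ over $\mathbb{Z}_2$ is $F_n$-good if it is invertible and $A\vec{x}\in F_n$ for all $\vec{x}\in F_n$. *)

theory Defs
  imports "HOL-Library.Z2" "Jordan_Normal_Form.Matrix"
begin

text \<open>Indices are 0-based (Jordan_Normal_Form convention): paper index t corresponds to t-1.\<close>

definition F_set :: "nat \<Rightarrow> bit vec set" where
  "F_set n = {x \<in> carrier_vec n. \<not> (\<exists>i. Suc i < n \<and> x $ i = 1 \<and> x $ Suc i = 1)}"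

definition F_good :: "nat \<Rightarrow> bit mat \<Rightarrow> bool" where
  "F_good n A \<longleftrightarrow> A \<in> carrier_mat n n \<and> invertible_mat A \<and> (\<forall>x \<in> F_set n. A *\<^sub>v x \<in> F_set n)"

end

theory Submission
  imports Defs
begin

text \<open>If row i has ones in columns j < k, apply A to the F_n-vectors e_j, e_k and e_t + e_j,
  e_t + e_k, where t is any column in which an adjacent row q has a one: the images must not have
  ones in both rows i and q, which forces t to be adjacent to both j and k, so t = j + 1 = k - 1.
  An invertible matrix has no zero row, hence every row adjacent to row i equals e_(j+1);
  an interior row i would have two such neighbours, i.e. two equal rows, again contradicting
  invertibility.\<close>

lemma invertible_mat_right_inverse:
  assumes "invertible_mat A" and "A \<in> carrier_mat n n"
  obtains B where "B \<in> carrier_mat n n"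
    and "\<And>r c. r < n \<Longrightarrow> c < n \<Longrightarrow> row A r \<bullet> col B c = (if r = c then 1 else 0)"
proof -
  obtain B where AB: "A * B = 1\<^sub>m n" and BA: "B * A = 1\<^sub>m (dim_row B)"
    using assms unfolding invertible_mat_def inverts_mat_def by auto
  have "dim_col B = n" using arg_cong[OF AB, of dim_col] by simp
  moreover have "dim_row B = n" using arg_cong[OF BA, of dim_col] assms(2) by simp
  moreover have "row A r \<bullet> col B c = (if r = c then 1 else 0)" if "r < n" "c < n" for r c
    using index_mult_mat(1)[of r A c B] AB assms(2) that calculation by simp
  ultimately show thesis using that by blast
qed

lemma invertible_mat_row_nonzero:
  fixes A :: "'a :: {semiring_1, zero_neq_one} mat"
  assumes "invertible_mat A" and "A \<in> carrier_mat n n" and "r < n"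
  shows "row A r \<noteq> 0\<^sub>v n"
proof
  assume zero: "row A r = 0\<^sub>v n"
  obtain B where "B \<in> carrier_mat n n" and "row A r \<bullet> col B r = 1"
    using invertible_mat_right_inverse[OF assms(1,2)] assms(3) by metis
  moreover have "0\<^sub>v n \<bullet> col B r = 0"
    using \<open>B \<in> carrier_mat n n\<close> by (intro scalar_prod_left_zero) auto
  ultimately show False by (simp add: zero)
qed

lemma invertible_mat_row_inj:
  fixes A :: "'a :: {semiring_1, zero_neq_one} mat"
  assumes "invertible_mat A" and "A \<in> carrier_mat n n"
    and "r < n" and "r' < n" and "row A r = row A r'"
  shows "r = r'"
proof -
  obtain B where "\<And>c. c < n \<Longrightarrow> row A r \<bullet> col B c = (if r = c then 1 else 0)"
    and "row A r' \<bullet> col B r' = 1"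
    using invertible_mat_right_inverse[OF assms(1,2)] assms(3,4) by metis
  then show ?thesis using assms(4,5) by (metis zero_neq_one)
qed

lemma mult_mat_vec_unit_vec_index:
  fixes A :: "'a :: semiring_1 mat"
  assumes "A \<in> carrier_mat m n" and "r < m" and "t < n"
  shows "(A *\<^sub>v unit_vec n t) $ r = A $$ (r, t)"
  using assms by (simp add: scalar_prod_right_unit)

lemma unit_vec_mem_F_set: "t < n \<Longrightarrow> unit_vec n t \<in> F_set n"
  unfolding F_set_def by auto

lemma unit_vec_add_mem_F_set:
  assumes "s < n" and "t < n" and "s \<noteq> Suc t" and "t \<noteq> Suc s"
  shows "unit_vec n s + unit_vec n t \<in> F_set n"
  using assms unfolding F_set_def by (auto simp: unit_vec_def)

lemma F_good_not_both_one:
  assumes "F_good n A" and "x \<in> F_set n"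
    and "p < n" and "q < n" and "p = Suc q \<or> q = Suc p"
  shows "(A *\<^sub>v x) $ p = 0 \<or> (A *\<^sub>v x) $ q = 0"
proof -
  have "A *\<^sub>v x \<in> F_set n" using assms(1,2) unfolding F_good_def by blast
  then show ?thesis using assms(3-5) unfolding F_set_def by auto
qed

lemma F_good_adjacent_rows_disjoint:
  assumes "F_good n A" and "p < n" and "q < n" and "p = Suc q \<or> q = Suc p"
    and "t < n" and "A $$ (p, t) = 1"
  shows "A $$ (q, t) = 0"
proof -
  have "A \<in> carrier_mat n n" using assms(1) unfolding F_good_def by blast
  then show ?thesis
    using F_good_not_both_one[OF assms(1) unit_vec_mem_F_set[OF assms(5)] assms(2-4)]
      assms(2,3,5,6) by (simp add: mult_mat_vec_unit_vec_index)
qed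

lemma F_good_adjacent_rows_adjacent_ones:
  assumes G: "F_good n A" and pq: "p < n" "q < n" "p = Suc q \<or> q = Suc p"
    and "s < n" and "t < n" and "A $$ (p, s) = 1" and "A $$ (q, t) = 1"
  shows "s = Suc t \<or> t = Suc s"
proof (rule ccontr)
  assume far: "\<not> (s = Suc t \<or> t = Suc s)"
  have C: "A \<in> carrier_mat n n" using G unfolding F_good_def by blast
  have qp: "q = Suc p \<or> p = Suc q" using pq(3) by blast
  have "A $$ (p, t) = 0" and "A $$ (q, s) = 0"
    using F_good_adjacent_rows_disjoint[OF G pq(2,1) qp] F_good_adjacent_rows_disjoint[OF G pq]
      assms(5-8) by auto
  moreover have "A *\<^sub>v (unit_vec n s + unit_vec n t) = A *\<^sub>v unit_vec n s + A *\<^sub>v unit_vec n t"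
    using C by (simp add: mult_add_distrib_mat_vec)
  ultimately show False
    using F_good_not_both_one[OF G unit_vec_add_mem_F_set[OF assms(5,6)] pq] far C pq(1,2)
      assms(5-8) by (simp add: mult_mat_vec_unit_vec_index)
qed

lemma F_good_neighbour_row:
  assumes G: "F_good n A" and "i < n" and "q < n" and "i = Suc q \<or> q = Suc i"
    and "j < k" and "k < n" and "A $$ (i, j) = 1" and "A $$ (i, k) = 1"
  shows "k = j + 2 \<and> row A q = unit_vec n (Suc j)"
proof -
  have C: "A \<in> carrier_mat n n" and inv: "invertible_mat A" using G unfolding F_good_def by auto
  have ones: "t = Suc j \<and> k = j + 2" if "t < n" "A $$ (q, t) = 1" for t
    using F_good_adjacent_rows_adjacent_ones[OF G assms(2-4), of j t]
      F_good_adjacent_rows_adjacent_ones[OF G assms(2-4), of k t] assms(5-8) that by auto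
  have "\<exists>t < n. A $$ (q, t) = 1"
  proof (rule ccontr)
    assume "\<not> (\<exists>t < n. A $$ (q, t) = 1)"
    then have "row A q = 0\<^sub>v n" using C assms(3) by (intro eq_vecI) auto
    then show False using invertible_mat_row_nonzero[OF inv C assms(3)] by blast
  qed
  then obtain t where t: "t < n" "A $$ (q, t) = 1" by blast
  have "A $$ (q, s) = (if s = Suc j then 1 else 0)" if "s < n" for s
    using ones[OF t] ones[OF that] t by (cases "A $$ (q, s)") auto
  then have "row A q = unit_vec n (Suc j)"
    using C assms(3) by (intro eq_vecI) (auto simp: unit_vec_def)
  then show ?thesis using ones[OF t] by blast
qed

theorem lemma2:
  fixes n :: nat and A :: "bit mat" and i j k :: nat
  assumes "n \<ge> 3" and "F_good n A"
    and "i < n" and "j < k" and "k < n"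
    and "A $$ (i, j) = 1" and "A $$ (i, k) = 1"
  shows "k = j + 2 \<and> (i = 0 \<or> i = n - 1)"
proof -
  note neighbour = F_good_neighbour_row[OF assms(2,3) _ _ assms(4-7)]
  have "k = j + 2"
  proof (cases i)
    case 0
    then show ?thesis using neighbour[of 1] assms(1) by auto
  next
    case (Suc i')
    then show ?thesis using neighbour[of i'] assms(3) by auto
  qed
  moreover have "i = 0 \<or> i = n - 1"
  proof (rule ccontr)
    assume "\<not> (i = 0 \<or> i = n - 1)"
    then obtain i' where i': "i = Suc i'" "Suc i < n" using assms(3) not0_implies_Suc by force
    have "row A i' = row A (Suc i)" using neighbour[of i'] neighbour[of "Suc i"] i' by auto
    moreover have "invertible_mat A" and "A \<in> carrier_mat n n"
      using assms(2) unfolding F_good_def by auto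
    ultimately have "i' = Suc i" using invertible_mat_row_inj i' by (metis Suc_lessD)
    then show False using i' by simp
  qed
  ultimately show ?thesis ..
qed

end
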